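(* Let $I=(0,1)$, $\nu>0$, $\gamma>1$, $\rho_0\in C(\bar I)$ with $\rho_0>0$ in $I$, $\rho_0=0$ on $\partial I$, and $v_0=u_0$ continuous on $\bar I$. Suppose that there exist positive $\lambda_1,\lambda_2,\lambda_3,\lambda_4$ with $0<\lambda_3,\lambda_4<1$ such that either ($\frac{(\rho_0)_x}{\rho_0}\ge\lambda_1$ in $(0,\lambda_3)$, $v_0(\lambda_3)<0$, $v_0\le0$ in $(0,\lambda_3)$) or ($\frac{(\rho_0)_x}{\rho_0}\le-\lambda_2$ in $(\lambda_4,1)$, $v_0(\lambda_4)>0$, $v_0\ge0$ in $(\lambda_4,1)$). Then for every $T>0$ the problem $$\rho_0 v_t+\Big(\frac{\rho_0^\gamma}{\eta_x^\gamma}\Big)_x=\nu\Big(\frac{v_x}{\eta_x}\Big)_x\ \text{ in } I\times(0,T],\qquad \eta_t=v,$$ $$(v,\eta)=(u_0,x)\text{ on }I\times\{t=0\},\qquad v=v_x=0\text{ on }\partial I\times(0,T],$$ has no solution $(v,\eta)$ in $C^{2,1}(\bar I\times[0,T])$.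
   Context: $C^{2,1}(\bar I\times[0,T])$ denotes functions that are $C^2$ in $x$ and $C^1$ in $t$ on $\bar I\times[0,T]$. *)

theory Defs
  imports "HOL-Analysis.Analysis"
begin

text \<open>Classical solution in \<open>C^{2,1}([0,1] \<times> [0,T])\<close> of the problem
  \<open>rho0 v_t + (rho0^gamma / eta_x^gamma)_x = nu (v_x / eta_x)_x\<close> in \<open>I \<times> (0,T]\<close>,
  \<open>eta_t = v\<close>, \<open>(v,eta) = (u0, x)\<close> at \<open>t = 0\<close>, \<open>v = v_x = 0\<close> on \<open>\<partial>I \<times> (0,T]\<close>.
  The functions vx, vxx, vt (resp. ex, exx, et) are the partial derivatives
  (one-sided at the boundary of the rectangle), required to be continuous on the
  closed rectangle, i.e. \<open>v, eta \<in> C^{2,1}\<close>.\<close>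

definition C21_with :: "real \<Rightarrow> (real \<Rightarrow> real \<Rightarrow> real) \<Rightarrow> (real \<Rightarrow> real \<Rightarrow> real)
    \<Rightarrow> (real \<Rightarrow> real \<Rightarrow> real) \<Rightarrow> (real \<Rightarrow> real \<Rightarrow> real) \<Rightarrow> bool" where
  "C21_with T f fx fxx ft \<longleftrightarrow>
     continuous_on ({0..1} \<times> {0..T}) (\<lambda>(x,t). f x t) \<and>
     continuous_on ({0..1} \<times> {0..T}) (\<lambda>(x,t). fx x t) \<and>
     continuous_on ({0..1} \<times> {0..T}) (\<lambda>(x,t). fxx x t) \<and>
     continuous_on ({0..1} \<times> {0..T}) (\<lambda>(x,t). ft x t) \<and>
     (\<forall>x\<in>{0..1}. \<forall>t\<in>{0..T}.
        ((\<lambda>y. f y t) has_real_derivative fx x t) (at x within {0..1}) \<and>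
        ((\<lambda>y. fx y t) has_real_derivative fxx x t) (at x within {0..1}) \<and>
        ((\<lambda>s. f x s) has_real_derivative ft x t) (at t within {0..T}))"

definition is_solution ::
  "real \<Rightarrow> real \<Rightarrow> real \<Rightarrow> (real \<Rightarrow> real) \<Rightarrow> (real \<Rightarrow> real)
     \<Rightarrow> (real \<Rightarrow> real \<Rightarrow> real) \<Rightarrow> (real \<Rightarrow> real \<Rightarrow> real) \<Rightarrow> bool" where
  "is_solution \<nu> \<gamma> T \<rho>0 u0 v \<eta> \<longleftrightarrow>
     (\<exists>vx vxx vt ex exx et.
        C21_with T v vx vxx vt \<and> C21_with T \<eta> ex exx et \<and>
        (\<forall>x\<in>{0<..<1}. \<forall>t\<in>{0<..T}.
           ex x t > 0 \<and>
           (\<exists>P Q.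
              ((\<lambda>y. (\<rho>0 y) powr \<gamma> / (ex y t) powr \<gamma>) has_real_derivative P) (at x) \<and>
              ((\<lambda>y. vx y t / ex y t) has_real_derivative Q) (at x) \<and>
              \<rho>0 x * vt x t + P = \<nu> * Q) \<and>
           et x t = v x t) \<and>
        (\<forall>x\<in>{0<..<1}. v x 0 = u0 x \<and> \<eta> x 0 = x) \<and>
        (\<forall>t\<in>{0<..T}. v 0 t = 0 \<and> v 1 t = 0 \<and> vx 0 t = 0 \<and> vx 1 t = 0))"

end

(*
  Near the wall x = 0 the density grows at least like e^(lam1 x), and for a short time the
  deformation gradient eta_x stays close to 1 with eta_xx small.  At a positive interior
  maximum of v the pressure term (rho0^gamma / eta_x^gamma)_x is then strictly positive while
  v_t >= 0 and (v_x / eta_x)_x <= 0, which contradicts the momentum equation.  This maximum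
  principle makes v negative on (0,a) x (0,tau], since it is nonpositive initially and negative
  at x = a.  The barrier v + eps (x^2 + x + K (t - tau)) obeys the same maximum principle, is
  nonpositive on [0,a] x [tau/2,tau] and vanishes at (0,tau); hence its x-derivative there,
  v_x(0,tau) + eps = eps, is nonpositive (a Hopf argument), contradicting v_x = 0 on the
  boundary.  The condition at the right wall reduces to this one under x -> 1 - x.
*)
theory Submission
  imports Defs
begin

lemma has_real_derivative_at_interior_Icc:
  fixes f :: "real \<Rightarrow> real"
  assumes "x \<in> {a<..<b}" and "(f has_real_derivative D) (at x within {a..b})"
  shows "(f has_real_derivative D) (at x)"
  using assms at_within_interior[of x "{a..b}"] by simp

lemma derivative_nonneg_at_right_endpoint_max:
  fixes f :: "real \<Rightarrow> real"
  assumes "a < t" and "(f has_real_derivative D) (at t within {a..t})"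
    and "\<And>s. s \<in> {a..t} \<Longrightarrow> f s \<le> f t"
  shows "0 \<le> D"
proof (rule tendsto_lowerbound)
  show "((\<lambda>s. (f s - f t) / (s - t)) \<longlongrightarrow> D) (at t within {a..t})"
    using assms(2) by (simp add: has_field_derivative_iff)
  show "\<forall>\<^sub>F s in at t within {a..t}. 0 \<le> (f s - f t) / (s - t)"
    unfolding eventually_at_filter
    by (intro always_eventually) (auto intro!: divide_nonpos_neg simp: assms(3))
  show "at t within {a..t} \<noteq> bot"
    using assms(1) by (simp add: trivial_limit_within islimpt_Icc)
qed

lemma derivative_nonpos_at_left_endpoint_max:
  fixes f :: "real \<Rightarrow> real"
  assumes "x < b" and "(f has_real_derivative D) (at x within {x..b})"
    and "\<And>y. y \<in> {x..b} \<Longrightarrow> f y \<le> f x"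
  shows "D \<le> 0"
proof (rule tendsto_upperbound)
  show "((\<lambda>y. (f y - f x) / (y - x)) \<longlongrightarrow> D) (at x within {x..b})"
    using assms(2) by (simp add: has_field_derivative_iff)
  show "\<forall>\<^sub>F y in at x within {x..b}. (f y - f x) / (y - x) \<le> 0"
    unfolding eventually_at_filter
    by (intro always_eventually) (auto intro!: divide_nonpos_pos simp: assms(3))
  show "at x within {x..b} \<noteq> bot"
    using assms(1) by (simp add: trivial_limit_within islimpt_Icc)
qed

lemma second_derivative_nonpos_at_local_max:
  fixes f f' :: "real \<Rightarrow> real"
  assumes "0 < d"
    and f': "\<And>y. \<bar>y - x\<bar> < d \<Longrightarrow> (f has_real_derivative f' y) (at y)"
    and max: "\<And>y. \<bar>y - x\<bar> < d \<Longrightarrow> f y \<le> f x"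
    and f'': "(f' has_real_derivative D) (at x)"
  shows "D \<le> 0"
proof (rule ccontr)
  assume "\<not> D \<le> 0"
  have "f' x = 0"
    using DERIV_local_max[OF f'[of x] \<open>0 < d\<close>] max \<open>0 < d\<close> by (simp add: abs_minus_commute)
  obtain e where "0 < e" and incr: "\<And>h. 0 < h \<Longrightarrow> h < e \<Longrightarrow> f' x < f' (x + h)"
    using DERIV_pos_inc_right[OF f''] \<open>\<not> D \<le> 0\<close> by force
  define h where "h = min d e / 2"
  have h: "0 < h" "h < d" "h < e"
    using \<open>0 < d\<close> \<open>0 < e\<close> by (auto simp: h_def)
  obtain z where z: "x < z" "z < x + h" and mvt: "f (x + h) - f x = h * f' z"
    using MVT2[of x "x + h" f f'] f' h by force
  have "0 < f' z"
    using incr[of "z - x"] z h \<open>f' x = 0\<close> by simp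
  then have "f x < f (x + h)"
    using mvt h(1) by (simp add: algebra_simps)
  with max[of "x + h"] h show False by simp
qed

lemma continuous_attains_max_on_rectangle:
  fixes f :: "real \<Rightarrow> real \<Rightarrow> real"
  assumes "continuous_on ({a..b} \<times> {c..d}) (\<lambda>(x, t). f x t)" and "a \<le> b" and "c \<le> d"
  obtains x t where "x \<in> {a..b}" "t \<in> {c..d}" "\<And>y s. y \<in> {a..b} \<Longrightarrow> s \<in> {c..d} \<Longrightarrow> f y s \<le> f x t"
proof -
  obtain p where "p \<in> {a..b} \<times> {c..d}"
    "\<forall>q \<in> {a..b} \<times> {c..d}. (\<lambda>(x, t). f x t) q \<le> (\<lambda>(x, t). f x t) p"
    using continuous_attains_sup[OF _ _ assms(1)] assms(2,3) by (auto simp: compact_Times)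
  then show ?thesis
    using that by (cases p) auto
qed

section \<open>The maximum principle near the left wall\<close>

lemma powr_quotient_derivative_pos:
  fixes r e :: "real \<Rightarrow> real"
  assumes "0 < \<gamma>" and "0 < r x" and "0 < e x"
    and r': "(r has_real_derivative r'x) (at x)" and e': "(e has_real_derivative e'x) (at x)"
    and "r x * e'x < r'x * e x"
    and P: "((\<lambda>y. r y powr \<gamma> / e y powr \<gamma>) has_real_derivative P) (at x)"
  shows "0 < P"
proof -
  have "((\<lambda>y. r y powr \<gamma> / e y powr \<gamma>) has_real_derivative
      (\<gamma> * r x powr (\<gamma> - 1) * r'x * e x powr \<gamma> - r x powr \<gamma> * (\<gamma> * e x powr (\<gamma> - 1) * e'x))
        / (e x powr \<gamma> * e x powr \<gamma>)) (at x)"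
    using DERIV_divide[OF DERIV_fun_powr[OF r' \<open>0 < r x\<close>] DERIV_fun_powr[OF e' \<open>0 < e x\<close>]]
      \<open>0 < e x\<close> by simp
  moreover have "r x powr \<gamma> = r x powr (\<gamma> - 1) * r x" "e x powr \<gamma> = e x powr (\<gamma> - 1) * e x"
    using assms(2,3) by (simp_all add: powr_diff)
  ultimately have "P = \<gamma> * r x powr (\<gamma> - 1) * e x powr (\<gamma> - 1) * (r'x * e x - r x * e'x)
      / (e x powr \<gamma> * e x powr \<gamma>)"
    using DERIV_unique[OF P] by (simp add: algebra_simps)
  then show ?thesis
    using assms(1,2,3,6) by simp
qed

text \<open>At a critical point of the barrier below, this quotient is \<open>(v\<^sub>x / \<eta>\<^sub>x)\<^sub>x\<close> with
  \<open>p = v\<^sub>x\<close>, \<open>q = v\<^sub>x\<^sub>x\<close>, \<open>e = \<eta>\<^sub>x\<close> and \<open>c = \<eta>\<^sub>x\<^sub>x\<close>.\<close>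

lemma viscous_quotient_le:
  fixes \<epsilon> x e c p q :: real
  assumes "0 \<le> \<epsilon>" and "0 < x" "x < 1" and "1/2 < e" "e < 3/2" and "\<bar>c\<bar> < 1/4"
    and "p + \<epsilon> * (2*x + 1) = 0" and "q + 2*\<epsilon> \<le> 0"
  shows "(q * e - p * c) / (e * e) \<le> - \<epsilon> / 9"
proof -
  have "- p * c \<le> \<epsilon> * 3 * (1/4)"
  proof -
    have "p = - (\<epsilon> * (2*x + 1))"
      using assms(7) by linarith
    then have "- p * c \<le> \<epsilon> * (2*x + 1) * \<bar>c\<bar>"
      using assms(1,2) by (simp add: mult_left_mono)
    also have "\<dots> \<le> \<epsilon> * 3 * (1/4)"
      using assms(1-3,6) by (intro mult_mono) auto
    finally show ?thesis .
  qed
  moreover have "q * e \<le> -2*\<epsilon> * e"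
    using mult_right_mono[of q "-2*\<epsilon>" e] assms(4,8) by simp
  moreover have "-2*\<epsilon> * e \<le> - \<epsilon>"
    using mult_left_mono[of 1 "2 * e" \<epsilon>] assms(1,4) by simp
  ultimately have num: "q * e - p * c \<le> - \<epsilon> / 4"
    by linarith
  have "e * e < 9/4"
    using mult_strict_mono[of e "3/2" e "3/2"] assms(4,5) by simp
  have "(q * e - p * c) / (e * e) \<le> (- \<epsilon> / 4) / (e * e)"
    using divide_right_mono[OF num, of "e * e"] assms(4) by simp
  also have "\<dots> \<le> (- \<epsilon> / 4) / (9/4)"
    using assms(1,4) \<open>e * e < 9/4\<close> by (intro divide_left_mono_neg) auto
  finally show ?thesis by simp
qed

text \<open>A solution restricted to a thin strip \<open>[0,a] \<times> [0,\<tau>]\<close> next to the wall \<open>x = 0\<close>;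
  \<open>ex\<close> and \<open>exx\<close> stand for \<open>\<eta>\<^sub>x\<close> and \<open>\<eta>\<^sub>x\<^sub>x\<close>, whose bounds hold for small \<open>\<tau>\<close>
  because \<open>\<eta> = x\<close> initially.\<close>

locale wall_strip =
  fixes \<nu> \<gamma> lam a \<tau> B :: real and \<rho> :: "real \<Rightarrow> real"
    and v vx vxx vt ex exx :: "real \<Rightarrow> real \<Rightarrow> real"
  assumes nu_pos: "0 < \<nu>" and gamma_pos: "0 < \<gamma>" and lam_pos: "0 < lam"
    and a_pos: "0 < a" and a_le_1: "a \<le> 1" and tau_pos: "0 < \<tau>"
    and rho_pos: "\<And>x. x \<in> {0<..<a} \<Longrightarrow> 0 < \<rho> x"
    and rho_le: "\<And>x. x \<in> {0<..<a} \<Longrightarrow> \<rho> x \<le> B"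
    and rho_growth: "\<And>x. x \<in> {0<..<a} \<Longrightarrow> \<exists>D. (\<rho> has_real_derivative D) (at x) \<and> lam * \<rho> x \<le> D"
    and v_x: "\<And>x t. x \<in> {0<..<a} \<Longrightarrow> t \<in> {0<..\<tau>} \<Longrightarrow>
      ((\<lambda>y. v y t) has_real_derivative vx x t) (at x)"
    and v_xx: "\<And>x t. x \<in> {0<..<a} \<Longrightarrow> t \<in> {0<..\<tau>} \<Longrightarrow>
      ((\<lambda>y. vx y t) has_real_derivative vxx x t) (at x)"
    and v_t: "\<And>x t. x \<in> {0<..<a} \<Longrightarrow> t \<in> {0<..\<tau>} \<Longrightarrow>
      ((\<lambda>s. v x s) has_real_derivative vt x t) (at t within {0..\<tau>})"
    and ex_x: "\<And>x t. x \<in> {0<..<a} \<Longrightarrow> t \<in> {0<..\<tau>} \<Longrightarrow>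
      ((\<lambda>y. ex y t) has_real_derivative exx x t) (at x)"
    and ex_near_1: "\<And>x t. x \<in> {0<..<a} \<Longrightarrow> t \<in> {0<..\<tau>} \<Longrightarrow> 1/2 < ex x t \<and> ex x t < 3/2"
    and exx_small: "\<And>x t. x \<in> {0<..<a} \<Longrightarrow> t \<in> {0<..\<tau>} \<Longrightarrow>
      \<bar>exx x t\<bar> < 1/4 \<and> \<bar>exx x t\<bar> < lam/4"
    and momentum: "\<And>x t. x \<in> {0<..<a} \<Longrightarrow> t \<in> {0<..\<tau>} \<Longrightarrow>
      \<exists>P Q. ((\<lambda>y. \<rho> y powr \<gamma> / ex y t powr \<gamma>) has_real_derivative P) (at x) \<and>
        ((\<lambda>y. vx y t / ex y t) has_real_derivative Q) (at x) \<and> \<rho> x * vt x t + P = \<nu> * Q"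
    and v_cont: "continuous_on ({0..a} \<times> {0..\<tau>}) (\<lambda>(x, t). v x t)"
    and v_initial: "\<And>x. x \<in> {0..a} \<Longrightarrow> v x 0 \<le> 0"
    and v_left: "\<And>t. t \<in> {0<..\<tau>} \<Longrightarrow> v 0 t = 0"
    and v_right: "\<And>t. t \<in> {0..\<tau>} \<Longrightarrow> v a t < 0"
    and v_flux_left: "((\<lambda>y. v y \<tau>) has_real_derivative 0) (at 0 within {0..a})"
begin

text \<open>With this slope, \<open>\<rho> v\<^sub>t \<ge> -\<epsilon>\<nu>/64\<close> at a maximum of the barrier, too little to
  balance the viscous term \<open>\<le> -\<epsilon>\<nu>/9\<close>.\<close>

definition K :: real where "K = \<nu> / (64 * B)"

definition barrier :: "real \<Rightarrow> real \<Rightarrow> real \<Rightarrow> real" where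
  "barrier \<epsilon> y s = v y s + \<epsilon> * (y\<^sup>2 + y + K * (s - \<tau>))"

lemma barrier_0 [simp]: "barrier 0 = v"
  by (simp add: barrier_def fun_eq_iff)

lemma B_pos: "0 < B"
  using rho_pos[of "a/2"] rho_le[of "a/2"] a_pos by simp

lemma K_pos: "0 < K"
  using nu_pos B_pos by (simp add: K_def)

lemma pressure_term_pos:
  assumes "x \<in> {0<..<a}" "t \<in> {0<..\<tau>}"
    and P: "((\<lambda>y. \<rho> y powr \<gamma> / ex y t powr \<gamma>) has_real_derivative P) (at x)"
  shows "0 < P"
proof -
  obtain D where D: "(\<rho> has_real_derivative D) (at x)" "lam * \<rho> x \<le> D"
    using rho_growth assms(1) by blast
  have e: "1/2 < ex x t" and c: "\<bar>exx x t\<bar> < lam/4" and r: "0 < \<rho> x"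
    using ex_near_1 exx_small rho_pos assms(1,2) by auto
  have "\<rho> x * exx x t \<le> \<rho> x * (lam/4)"
    using c r by (intro mult_left_mono) auto
  also have "\<dots> < lam * \<rho> x * ex x t"
    using e r lam_pos by simp
  also have "\<dots> \<le> D * ex x t"
    using D(2) e by (simp add: mult_right_mono)
  finally show ?thesis
    using powr_quotient_derivative_pos[OF gamma_pos r _ D(1) ex_x[OF assms(1,2)] _ P] e by simp
qed

lemma viscous_term_le:
  assumes x: "x \<in> {0<..<a}" and t: "t \<in> {0<..\<tau>}" and "0 \<le> \<epsilon>"
    and vx_eq: "vx x t + \<epsilon> * (2*x + 1) = 0" and vxx_le: "vxx x t + 2*\<epsilon> \<le> 0"
    and Q: "((\<lambda>y. vx y t / ex y t) has_real_derivative Q) (at x)"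
  shows "\<nu> * Q \<le> - \<epsilon> * \<nu> / 9"
proof -
  have e: "1/2 < ex x t" "ex x t < 3/2" and c: "\<bar>exx x t\<bar> < 1/4"
    using ex_near_1[OF x t] exx_small[OF x t] by auto
  have "Q = (vxx x t * ex x t - vx x t * exx x t) / (ex x t * ex x t)"
    using DERIV_unique[OF Q DERIV_divide[OF v_xx[OF x t] ex_x[OF x t]]] e by simp
  also have "\<dots> \<le> - \<epsilon> / 9"
    using viscous_quotient_le[OF \<open>0 \<le> \<epsilon>\<close> _ _ e c vx_eq vxx_le] x a_le_1 by auto
  finally show ?thesis
    using mult_left_mono[of Q "- \<epsilon> / 9" \<nu>] nu_pos by (simp add: mult.commute)
qed

lemma inertia_term_ge:
  assumes x: "x \<in> {0<..<a}" and "0 \<le> \<epsilon>" and vt_ge: "0 \<le> vt x t + \<epsilon> * K"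
  shows "- \<epsilon> * \<nu> / 64 \<le> \<rho> x * vt x t"
proof -
  have "\<epsilon> * K * \<rho> x \<le> \<epsilon> * K * B"
    using rho_le[OF x] K_pos \<open>0 \<le> \<epsilon>\<close> by (simp add: mult_left_mono)
  moreover have "- (\<epsilon> * K) * \<rho> x \<le> vt x t * \<rho> x"
    using mult_right_mono[OF _ less_imp_le[OF rho_pos[OF x]], of "- (\<epsilon> * K)"] vt_ge by simp
  ultimately show ?thesis
    using B_pos by (simp add: K_def algebra_simps)
qed

lemma barrier_max_conditions:
  assumes x: "x \<in> {0<..<a}" and t: "t \<in> {0<..\<tau>}" and "0 \<le> s0" "s0 < t"
    and max_x: "\<And>y. y \<in> {0..a} \<Longrightarrow> barrier \<epsilon> y t \<le> barrier \<epsilon> x t"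
    and max_t: "\<And>s. s \<in> {s0..t} \<Longrightarrow> barrier \<epsilon> x s \<le> barrier \<epsilon> x t"
  shows "vx x t + \<epsilon> * (2*x + 1) = 0" and "vxx x t + 2*\<epsilon> \<le> 0" and "0 \<le> vt x t + \<epsilon> * K"
proof -
  define d where "d = min x (a - x)"
  have "0 < d"
    using x by (simp add: d_def)
  have near_x: "y \<in> {0<..<a}" "y \<in> {0..a}" if "\<bar>y - x\<bar> < d" for y
    using that x by (auto simp: d_def abs_less_iff)
  have barrier_x: "((\<lambda>y. barrier \<epsilon> y t) has_real_derivative vx y t + \<epsilon> * (2*y + 1)) (at y)"
    if "y \<in> {0<..<a}" for y
    unfolding barrier_def using v_x[OF that t] by (auto intro!: derivative_eq_intros)
  show "vx x t + \<epsilon> * (2*x + 1) = 0"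
    by (rule DERIV_local_max[OF barrier_x[OF x] \<open>0 < d\<close>])
      (auto simp: abs_minus_commute intro!: max_x near_x)
  have "((\<lambda>y. vx y t + \<epsilon> * (2*y + 1)) has_real_derivative vxx x t + 2*\<epsilon>) (at x)"
    using v_xx[OF x t] by (auto intro!: derivative_eq_intros)
  from second_derivative_nonpos_at_local_max[OF \<open>0 < d\<close> _ _ this, where f="\<lambda>y. barrier \<epsilon> y t"]
  show "vxx x t + 2*\<epsilon> \<le> 0"
    using barrier_x max_x near_x by blast
  have "((\<lambda>s. barrier \<epsilon> x s) has_real_derivative vt x t + \<epsilon> * K) (at t within {s0..t})"
    using has_field_derivative_subset[OF v_t[OF x t], of "{s0..t}"] t \<open>0 \<le> s0\<close>
    unfolding barrier_def by (auto intro!: derivative_eq_intros)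
  then show "0 \<le> vt x t + \<epsilon> * K"
    using derivative_nonneg_at_right_endpoint_max \<open>s0 < t\<close> max_t by blast
qed

lemma no_interior_max:
  assumes x: "x \<in> {0<..<a}" and t: "t \<in> {0<..\<tau>}" and "0 \<le> s0" "s0 < t" and "0 \<le> \<epsilon>"
    and max_x: "\<And>y. y \<in> {0..a} \<Longrightarrow> barrier \<epsilon> y t \<le> barrier \<epsilon> x t"
    and max_t: "\<And>s. s \<in> {s0..t} \<Longrightarrow> barrier \<epsilon> x s \<le> barrier \<epsilon> x t"
  shows False
proof -
  note critical = barrier_max_conditions[OF x t \<open>0 \<le> s0\<close> \<open>s0 < t\<close> max_x max_t]
  obtain P Q where P: "((\<lambda>y. \<rho> y powr \<gamma> / ex y t powr \<gamma>) has_real_derivative P) (at x)"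
    and Q: "((\<lambda>y. vx y t / ex y t) has_real_derivative Q) (at x)"
    and eq: "\<rho> x * vt x t + P = \<nu> * Q"
    using momentum[OF x t] by blast
  have "\<nu> * Q \<le> - \<epsilon> * \<nu> / 9"
    using viscous_term_le[OF x t \<open>0 \<le> \<epsilon>\<close> critical(1,2) Q] .
  moreover have "- \<epsilon> * \<nu> / 64 \<le> \<rho> x * vt x t"
    using inertia_term_ge[OF x \<open>0 \<le> \<epsilon>\<close> critical(3)] .
  moreover have "0 \<le> \<epsilon> * \<nu>"
    using \<open>0 \<le> \<epsilon>\<close> nu_pos by simp
  ultimately show False
    using eq pressure_term_pos[OF x t P] by linarith
qed

lemma v_nonpos:
  assumes "x \<in> {0..a}" "t \<in> {0..\<tau>}"
  shows "v x t \<le> 0"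
proof -
  obtain xm tm where m: "xm \<in> {0..a}" "tm \<in> {0..\<tau>}"
    and max: "\<And>y s. y \<in> {0..a} \<Longrightarrow> s \<in> {0..\<tau>} \<Longrightarrow> v y s \<le> v xm tm"
    using continuous_attains_max_on_rectangle[OF v_cont] a_pos tau_pos by auto
  have "v xm tm \<le> 0"
  proof (rule ccontr)
    assume pos: "\<not> v xm tm \<le> 0"
    consider "tm = 0" | "xm = 0" "0 < tm" | "xm = a" | "xm \<in> {0<..<a}" "tm \<in> {0<..\<tau>}"
      using m by fastforce
    then show False
    proof cases
      case 4
      show False
        by (rule no_interior_max[OF 4 order_refl, of 0]) (use 4 m max in auto)
    qed (use pos m v_initial[of xm] v_left[of tm] v_right[of tm] in auto)
  qed
  then show ?thesis
    using max[OF assms] by simp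
qed

lemma v_neg:
  assumes x: "x \<in> {0<..<a}" and t: "t \<in> {0<..\<tau>}"
  shows "v x t < 0"
proof (rule ccontr)
  assume "\<not> v x t < 0"
  then have "v x t = 0"
    using v_nonpos[of x t] x t by auto
  show False
    by (rule no_interior_max[OF x t order_refl, of 0]) (use \<open>v x t = 0\<close> t v_nonpos x in auto)
qed

lemma v_uniformly_negative:
  assumes "0 < x1" "x1 \<le> a"
  obtains \<mu> where "\<mu> < 0" "\<And>y s. y \<in> {x1..a} \<Longrightarrow> s \<in> {\<tau>/2..\<tau>} \<Longrightarrow> v y s \<le> \<mu>"
proof -
  have "continuous_on ({x1..a} \<times> {\<tau>/2..\<tau>}) (\<lambda>(x, t). v x t)"
    by (rule continuous_on_subset[OF v_cont]) (use assms in auto)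
  then obtain xm tm where m: "xm \<in> {x1..a}" "tm \<in> {\<tau>/2..\<tau>}"
    and max: "\<And>y s. y \<in> {x1..a} \<Longrightarrow> s \<in> {\<tau>/2..\<tau>} \<Longrightarrow> v y s \<le> v xm tm"
    using continuous_attains_max_on_rectangle[of x1 a "\<tau>/2" \<tau> v] assms tau_pos by auto
  have "v xm tm < 0"
    using v_neg[of xm tm] v_right[of tm] m assms tau_pos by (cases "xm = a") auto
  with that max show ?thesis by blast
qed

lemma continuous_on_barrier: "continuous_on ({0..a} \<times> {\<tau>/2..\<tau>}) (\<lambda>(y, s). barrier \<epsilon> y s)"
proof -
  have "continuous_on ({0..a} \<times> {\<tau>/2..\<tau>}) (\<lambda>(y, s). v y s)"
    by (rule continuous_on_subset[OF v_cont]) auto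
  then show ?thesis
    unfolding barrier_def case_prod_beta by (intro continuous_intros) auto
qed

text \<open>Where \<open>v \<le> \<mu> < 0\<close> the barrier term is absorbed; on the bottom edge
  \<open>t = \<tau>/2\<close> near the wall it is nonpositive because \<open>x1 \<le> K\<tau>/4\<close>.\<close>

lemma barrier_nonpos_at_max:
  assumes x1: "0 < x1" "x1 \<le> a/2" "x1 \<le> K * \<tau> / 4"
    and v_le: "\<And>y s. y \<in> {x1..a} \<Longrightarrow> s \<in> {\<tau>/2..\<tau>} \<Longrightarrow> v y s \<le> \<mu>"
    and \<epsilon>: "0 < \<epsilon>" "\<epsilon> \<le> 1" "\<epsilon> \<le> - \<mu> / 4"
    and m: "xm \<in> {0..a}" "tm \<in> {\<tau>/2..\<tau>}"
    and max: "\<And>y s. y \<in> {0..a} \<Longrightarrow> s \<in> {\<tau>/2..\<tau>} \<Longrightarrow> barrier \<epsilon> y s \<le> barrier \<epsilon> xm tm"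
  shows "barrier \<epsilon> xm tm \<le> 0"
proof (rule ccontr)
  assume pos: "\<not> barrier \<epsilon> xm tm \<le> 0"
  have K_tm: "K * (tm - \<tau>) \<le> 0"
    using m K_pos by (simp add: mult_le_0_iff)
  have sq: "xm\<^sup>2 \<le> xm"
    using m a_le_1 by (simp add: power2_eq_square mult_left_le_one_le)
  consider "x1 \<le> xm" | "xm = 0" | "xm \<in> {0<..<a}" "xm < x1" "tm = \<tau>/2" | "xm \<in> {0<..<a}" "\<tau>/2 < tm"
    using m x1 by fastforce
  then show False
  proof cases
    case 1
    have "\<epsilon> * (xm\<^sup>2 + xm + K * (tm - \<tau>)) \<le> \<epsilon> * 2"
      using sq m K_tm a_le_1 \<epsilon> by (intro mult_left_mono) auto
    moreover have "v xm tm \<le> \<mu>"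
      using v_le 1 m by simp
    ultimately show False
      using pos \<epsilon> unfolding barrier_def by linarith
  next
    case 2
    then show False
      using pos v_left[of tm] m tau_pos K_tm \<epsilon> by (simp add: barrier_def mult_nonneg_nonpos)
  next
    case 3
    have "K * (tm - \<tau>) = - (K * \<tau> / 2)"
      using 3 by (simp add: algebra_simps)
    then have "xm\<^sup>2 + xm + K * (tm - \<tau>) \<le> 0"
      using 3 sq x1 by linarith
    then have "\<epsilon> * (xm\<^sup>2 + xm + K * (tm - \<tau>)) \<le> 0"
      using \<epsilon>(1) by (simp add: mult_nonneg_nonpos)
    then show False
      using pos v_nonpos[of xm tm] m tau_pos unfolding barrier_def by auto
  next
    case 4
    show False
      by (rule no_interior_max[OF 4(1) _ _ 4(2) less_imp_le[OF \<epsilon>(1)]]) (use m tau_pos max in auto)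
  qed
qed

lemma barrier_nonpos:
  obtains \<epsilon> where "0 < \<epsilon>" "\<And>y s. y \<in> {0..a} \<Longrightarrow> s \<in> {\<tau>/2..\<tau>} \<Longrightarrow> barrier \<epsilon> y s \<le> 0"
proof -
  define x1 where "x1 = min (a/2) (K * \<tau> / 4)"
  have x1: "0 < x1" "x1 \<le> a/2" "x1 \<le> K * \<tau> / 4"
    using a_pos K_pos tau_pos by (auto simp: x1_def)
  obtain \<mu> where "\<mu> < 0" and v_le: "\<And>y s. y \<in> {x1..a} \<Longrightarrow> s \<in> {\<tau>/2..\<tau>} \<Longrightarrow> v y s \<le> \<mu>"
    using v_uniformly_negative[of x1] x1 a_pos by auto
  define \<epsilon> where "\<epsilon> = min 1 (- \<mu> / 4)"
  have \<epsilon>: "0 < \<epsilon>" "\<epsilon> \<le> 1" "\<epsilon> \<le> - \<mu> / 4"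
    using \<open>\<mu> < 0\<close> by (auto simp: \<epsilon>_def)
  obtain xm tm where m: "xm \<in> {0..a}" "tm \<in> {\<tau>/2..\<tau>}"
    and max: "\<And>y s. y \<in> {0..a} \<Longrightarrow> s \<in> {\<tau>/2..\<tau>} \<Longrightarrow> barrier \<epsilon> y s \<le> barrier \<epsilon> xm tm"
    using continuous_attains_max_on_rectangle[of 0 a "\<tau>/2" \<tau> "barrier \<epsilon>"] continuous_on_barrier
      a_pos tau_pos by auto
  with that \<epsilon>(1) barrier_nonpos_at_max[OF x1 v_le \<epsilon> m max] show ?thesis
    by fastforce
qed

lemma inconsistent: False
proof -
  obtain \<epsilon> where "0 < \<epsilon>" and nonpos: "\<And>y s. y \<in> {0..a} \<Longrightarrow> s \<in> {\<tau>/2..\<tau>} \<Longrightarrow> barrier \<epsilon> y s \<le> 0"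
    by (rule barrier_nonpos) blast
  have "((\<lambda>y. barrier \<epsilon> y \<tau>) has_real_derivative 0 + \<epsilon> * (2 * 0 + 1)) (at 0 within {0..a})"
    using v_flux_left unfolding barrier_def by (auto intro!: derivative_eq_intros)
  moreover have "barrier \<epsilon> 0 \<tau> = 0"
    using v_left tau_pos by (simp add: barrier_def)
  ultimately have "\<epsilon> \<le> 0"
    using derivative_nonpos_at_left_endpoint_max[OF a_pos] nonpos tau_pos by fastforce
  with \<open>0 < \<epsilon>\<close> show False by simp
qed

end

section \<open>Short-time control of a classical solution\<close>

lemma continuous_on_rectangle_slice:
  fixes f :: "real \<Rightarrow> real \<Rightarrow> real"
  assumes "continuous_on (A \<times> B) (\<lambda>(x, t). f x t)" and "x \<in> A"
  shows "continuous_on B (f x)"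
proof -
  have "continuous_on B ((\<lambda>(x, t). f x t) \<circ> (\<lambda>t. (x, t)))"
    by (rule continuous_on_compose[OF _ continuous_on_subset[OF assms(1)]])
      (use assms(2) in \<open>auto intro!: continuous_intros\<close>)
  then show ?thesis
    by (simp add: comp_def)
qed

lemma continuous_extension_at_initial_time:
  fixes g :: "real \<Rightarrow> real"
  assumes "continuous_on {0..T} g" and "0 < T" and "\<And>t. t \<in> {0<..T} \<Longrightarrow> g t = c"
  shows "g 0 = c"
  using continuous_constant_on_closure[of "{0<..T}" g c 0] assms by auto

lemma eventually_uniformly_close_to_initial:
  fixes f :: "real \<Rightarrow> real \<Rightarrow> real"
  assumes "continuous_on ({0..1} \<times> {0..T}) (\<lambda>(x, t). f x t)" and "0 < T" and "0 < e"
  shows "\<forall>\<^sub>F \<tau> in at_right 0. \<forall>x\<in>{0..1}. \<forall>t\<in>{0..\<tau>}. \<bar>f x t - f x 0\<bar> < e"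
proof -
  have "uniformly_continuous_on ({0..1} \<times> {0..T}) (\<lambda>(x, t). f x t)"
    by (intro compact_uniformly_continuous assms(1) compact_Times compact_Icc)
  then obtain d where "0 < d" and d: "\<And>p q. p \<in> {0..1} \<times> {0..T} \<Longrightarrow> q \<in> {0..1} \<times> {0..T} \<Longrightarrow>
      dist q p < d \<Longrightarrow> dist ((\<lambda>(x, t). f x t) q) ((\<lambda>(x, t). f x t) p) < e"
    unfolding uniformly_continuous_on_def using assms(3) by metis
  have "\<bar>f x t - f x 0\<bar> < e" if "x \<in> {0..1}" "t \<in> {0..\<tau>}" "\<tau> < min d T" for x t \<tau>
    using d[of "(x, 0)" "(x, t)"] that assms(2) by (auto simp: dist_Pair_Pair dist_real_def)
  then show ?thesis
    using \<open>0 < d\<close> assms(2) by (auto simp: eventually_at_right_field intro!: exI[of _ "min d T"])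
qed

lemma initial_gradient_of_identity:
  assumes "C21_with T \<eta> ex exx et" and "0 \<le> T"
    and init: "\<And>x. x \<in> {0<..<1} \<Longrightarrow> \<eta> x 0 = x" and x: "x \<in> {0<..<1}"
  shows "ex x 0 = 1" and "exx x 0 = 0"
proof -
  have d: "((\<lambda>y. \<eta> y 0) has_real_derivative ex y 0) (at y)"
    "((\<lambda>y. ex y 0) has_real_derivative exx y 0) (at y)"
    if "y \<in> {0<..<1}" for y
    using assms(1,2) that by (auto simp: C21_with_def intro: has_real_derivative_at_interior_Icc)
  have ex0: "ex y 0 = 1" if "y \<in> {0<..<1}" for y
  proof -
    have "((\<lambda>y. y) has_real_derivative ex y 0) (at y)"
      by (rule has_field_derivative_transform_within_open[OF d(1)[OF that] _ that])
        (use init in simp_all)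
    then show ?thesis
      using DERIV_ident DERIV_unique by blast
  qed
  then show "ex x 0 = 1" using x .
  have "((\<lambda>y. 1) has_real_derivative exx x 0) (at x)"
    by (rule has_field_derivative_transform_within_open[OF d(2)[OF x] open_greaterThanLessThan x])
      (use ex0 in simp)
  then show "exx x 0 = 0"
    using DERIV_const DERIV_unique by blast
qed

lemma eventually_gradient_near_identity:
  fixes ex exx :: "real \<Rightarrow> real \<Rightarrow> real"
  assumes "0 < T" and "0 < lam"
    and "continuous_on ({0..1} \<times> {0..T}) (\<lambda>(x, t). ex x t)"
    and "continuous_on ({0..1} \<times> {0..T}) (\<lambda>(x, t). exx x t)"
    and initial: "\<And>x. x \<in> {0<..<1} \<Longrightarrow> ex x 0 = 1 \<and> exx x 0 = 0"
  shows "\<forall>\<^sub>F \<tau> in at_right 0. \<forall>x\<in>{0<..<1}. \<forall>t\<in>{0..\<tau>}.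
    1/2 < ex x t \<and> ex x t < 3/2 \<and> \<bar>exx x t\<bar> < 1/4 \<and> \<bar>exx x t\<bar> < lam/4"
proof -
  have "\<forall>\<^sub>F \<tau> in at_right 0. (\<forall>x\<in>{0..1}. \<forall>t\<in>{0..\<tau>}. \<bar>ex x t - ex x 0\<bar> < 1/2) \<and>
      (\<forall>x\<in>{0..1}. \<forall>t\<in>{0..\<tau>}. \<bar>exx x t - exx x 0\<bar> < min (1/4) (lam/4))"
    using assms(2) by (intro eventually_conj eventually_uniformly_close_to_initial[OF assms(3,1)]
      eventually_uniformly_close_to_initial[OF assms(4,1)]) simp_all
  then show ?thesis
  proof eventually_elim
    case (elim \<tau>)
    show ?case
    proof (intro ballI)
      fix x t :: real assume x: "x \<in> {0<..<1}" and "t \<in> {0..\<tau>}"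
      then have "\<bar>ex x t - ex x 0\<bar> < 1/2" "\<bar>exx x t - exx x 0\<bar> < min (1/4) (lam/4)"
        using elim by auto
      then show "1/2 < ex x t \<and> ex x t < 3/2 \<and> \<bar>exx x t\<bar> < 1/4 \<and> \<bar>exx x t\<bar> < lam/4"
        using initial[OF x] by (auto simp: abs_if split: if_splits)
    qed
  qed
qed

lemma eventually_stays_negative:
  fixes v :: "real \<Rightarrow> real \<Rightarrow> real"
  assumes "0 < T" and "continuous_on ({0..1} \<times> {0..T}) (\<lambda>(x, t). v x t)"
    and "a \<in> {0..1}" and "v a 0 < 0"
  shows "\<forall>\<^sub>F \<tau> in at_right 0. \<forall>t\<in>{0..\<tau>}. v a t < 0"
proof -
  have "\<forall>\<^sub>F \<tau> in at_right 0. \<forall>x\<in>{0..1}. \<forall>t\<in>{0..\<tau>}. \<bar>v x t - v x 0\<bar> < - v a 0"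
    using eventually_uniformly_close_to_initial[OF assms(2,1)] assms(4) by simp
  then show ?thesis
    by eventually_elim (use assms(3) in \<open>force simp: abs_less_iff\<close>)
qed

lemma wall_strip_of_solution:
  assumes "0 < \<nu>" "0 < \<gamma>" "0 < lam" "0 < a" "a < 1" "0 < \<tau>" "\<tau> \<le> T"
    and \<rho>_pos: "\<And>x. x \<in> {0<..<1} \<Longrightarrow> 0 < \<rho> x" and \<rho>_le: "\<And>x. x \<in> {0..1} \<Longrightarrow> \<rho> x \<le> B"
    and \<rho>_growth: "\<And>x. x \<in> {0<..<a} \<Longrightarrow> \<exists>D. (\<rho> has_real_derivative D) (at x) \<and> lam * \<rho> x \<le> D"
    and Cv: "C21_with T v vx vxx vt" and Ce: "C21_with T \<eta> ex exx et"
    and momentum: "\<And>x t. x \<in> {0<..<1} \<Longrightarrow> t \<in> {0<..T} \<Longrightarrow>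
      \<exists>P Q. ((\<lambda>y. \<rho> y powr \<gamma> / ex y t powr \<gamma>) has_real_derivative P) (at x) \<and>
        ((\<lambda>y. vx y t / ex y t) has_real_derivative Q) (at x) \<and> \<rho> x * vt x t + P = \<nu> * Q"
    and v_initial: "\<And>x. x \<in> {0<..<a} \<Longrightarrow> v x 0 \<le> 0"
    and bc: "\<And>t. t \<in> {0<..T} \<Longrightarrow> v 0 t = 0 \<and> vx 0 t = 0"
    and bounds: "\<And>x t. x \<in> {0<..<1} \<Longrightarrow> t \<in> {0..\<tau>} \<Longrightarrow>
      1/2 < ex x t \<and> ex x t < 3/2 \<and> \<bar>exx x t\<bar> < 1/4 \<and> \<bar>exx x t\<bar> < lam/4"
    and v_right: "\<And>t. t \<in> {0..\<tau>} \<Longrightarrow> v a t < 0"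
  shows "wall_strip \<nu> \<gamma> lam a \<tau> B \<rho> v vx vxx vt ex exx"
proof
  have deriv: "((\<lambda>y. v y t) has_real_derivative vx x t) (at x within {0..1})"
    "((\<lambda>y. vx y t) has_real_derivative vxx x t) (at x within {0..1})"
    "((\<lambda>s. v x s) has_real_derivative vt x t) (at t within {0..T})"
    "((\<lambda>y. ex y t) has_real_derivative exx x t) (at x within {0..1})"
    if "x \<in> {0..1}" "t \<in> {0..T}" for x t
    using Cv Ce that by (simp_all add: C21_with_def)
  fix x t assume "x \<in> {0<..<a}" and "t \<in> {0<..\<tau>}"
  then have x: "x \<in> {0<..<1}" and t: "t \<in> {0<..T}"
    using \<open>a < 1\<close> \<open>\<tau> \<le> T\<close> by auto
  then show "((\<lambda>y. v y t) has_real_derivative vx x t) (at x)"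
    "((\<lambda>y. vx y t) has_real_derivative vxx x t) (at x)"
    "((\<lambda>y. ex y t) has_real_derivative exx x t) (at x)"
    using deriv[of x t] by (auto intro: has_real_derivative_at_interior_Icc)
  show "((\<lambda>s. v x s) has_real_derivative vt x t) (at t within {0..\<tau>})"
    using has_field_derivative_subset[OF deriv(3)[of x t], of "{0..\<tau>}"] x t \<open>\<tau> \<le> T\<close> by auto
  show "1/2 < ex x t \<and> ex x t < 3/2" "\<bar>exx x t\<bar> < 1/4 \<and> \<bar>exx x t\<bar> < lam/4"
    using bounds[of x t] x \<open>t \<in> {0<..\<tau>}\<close> by auto
  show "\<exists>P Q. ((\<lambda>y. \<rho> y powr \<gamma> / ex y t powr \<gamma>) has_real_derivative P) (at x) \<and>
      ((\<lambda>y. vx y t / ex y t) has_real_derivative Q) (at x) \<and> \<rho> x * vt x t + P = \<nu> * Q"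
    using momentum x t by blast
next
  have cont: "continuous_on ({0..1} \<times> {0..T}) (\<lambda>(x, t). v x t)"
    using Cv by (simp add: C21_with_def)
  then show "continuous_on ({0..a} \<times> {0..\<tau>}) (\<lambda>(x, t). v x t)"
    by (rule continuous_on_subset) (use \<open>a < 1\<close> \<open>\<tau> \<le> T\<close> in auto)
  have "v 0 0 = 0"
    using continuous_extension_at_initial_time[OF continuous_on_rectangle_slice[OF cont]]
      bc assms(6,7) by simp
  then show "v x 0 \<le> 0" if "x \<in> {0..a}" for x
    using that v_initial v_right[of 0] \<open>0 < \<tau>\<close> by (cases "x = 0 \<or> x = a") auto
next
  have "((\<lambda>y. v y \<tau>) has_real_derivative vx 0 \<tau>) (at 0 within {0..1})"
    using Cv assms(6,7) by (simp add: C21_with_def)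
  then show "((\<lambda>y. v y \<tau>) has_real_derivative 0) (at 0 within {0..a})"
    using has_field_derivative_subset[of _ _ 0 "{0..1}" "{0..a}"] bc[of \<tau>] assms(5-7) by auto
qed (use assms in auto)

lemma no_solution_under_left_condition:
  assumes "0 < \<nu>" "0 < \<gamma>" "0 < T" "0 < lam" "0 < a" "a < 1"
    and \<rho>_cont: "continuous_on {0..1} \<rho>" and "\<And>x. x \<in> {0<..<1} \<Longrightarrow> 0 < \<rho> x"
    and "\<And>x. x \<in> {0<..<a} \<Longrightarrow> \<exists>D. (\<rho> has_real_derivative D) (at x) \<and> lam * \<rho> x \<le> D"
    and "u0 a < 0" and "\<And>x. x \<in> {0<..<a} \<Longrightarrow> u0 x \<le> 0"
  shows "\<not> is_solution \<nu> \<gamma> T \<rho> u0 v \<eta>"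
proof
  assume "is_solution \<nu> \<gamma> T \<rho> u0 v \<eta>"
  then obtain vx vxx vt ex exx et
    where Cv: "C21_with T v vx vxx vt" and Ce: "C21_with T \<eta> ex exx et"
    and eqn: "\<forall>x\<in>{0<..<1}. \<forall>t\<in>{0<..T}. 0 < ex x t \<and>
      (\<exists>P Q. ((\<lambda>y. \<rho> y powr \<gamma> / ex y t powr \<gamma>) has_real_derivative P) (at x) \<and>
        ((\<lambda>y. vx y t / ex y t) has_real_derivative Q) (at x) \<and> \<rho> x * vt x t + P = \<nu> * Q) \<and>
      et x t = v x t"
    and init: "\<forall>x\<in>{0<..<1}. v x 0 = u0 x \<and> \<eta> x 0 = x"
    and bc: "\<forall>t\<in>{0<..T}. v 0 t = 0 \<and> v 1 t = 0 \<and> vx 0 t = 0 \<and> vx 1 t = 0"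
    unfolding is_solution_def by blast
  have cont: "continuous_on ({0..1} \<times> {0..T}) (\<lambda>(x, t). v x t)"
    "continuous_on ({0..1} \<times> {0..T}) (\<lambda>(x, t). ex x t)"
    "continuous_on ({0..1} \<times> {0..T}) (\<lambda>(x, t). exx x t)"
    using Cv Ce by (simp_all add: C21_with_def)
  have "ex x 0 = 1 \<and> exx x 0 = 0" if "x \<in> {0<..<1}" for x
    using initial_gradient_of_identity[OF Ce] init that \<open>0 < T\<close> by auto
  then have "\<forall>\<^sub>F \<tau> in at_right 0. (0 < \<tau> \<and> \<tau> \<le> T) \<and>
      (\<forall>x\<in>{0<..<1}. \<forall>t\<in>{0..\<tau>}. 1/2 < ex x t \<and> ex x t < 3/2 \<and> \<bar>exx x t\<bar> < 1/4 \<and> \<bar>exx x t\<bar> < lam/4) \<and>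
      (\<forall>t\<in>{0..\<tau>}. v a t < 0)"
    using assms(3-6,10) init
    by (intro eventually_conj eventually_gradient_near_identity[OF _ _ cont(2,3)]
        eventually_stays_negative[OF _ cont(1)])
      (auto simp: eventually_at_right_field intro!: exI[of _ T])
  then obtain \<tau> where "0 < \<tau>" "\<tau> \<le> T"
    and "\<forall>x\<in>{0<..<1}. \<forall>t\<in>{0..\<tau>}. 1/2 < ex x t \<and> ex x t < 3/2 \<and> \<bar>exx x t\<bar> < 1/4 \<and> \<bar>exx x t\<bar> < lam/4"
    and "\<forall>t\<in>{0..\<tau>}. v a t < 0"
    using eventually_happens'[OF trivial_limit_at_right_real] by blast
  moreover obtain B where "\<And>x. x \<in> {0..1} \<Longrightarrow> \<rho> x \<le> B"
    using compact_attains_sup[OF compact_continuous_image[OF \<rho>_cont compact_Icc]] by fastforce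
  ultimately have "wall_strip \<nu> \<gamma> lam a \<tau> B \<rho> v vx vxx vt ex exx"
    using assms eqn init bc by (intro wall_strip_of_solution[OF _ _ _ _ _ _ _ _ _ _ Cv Ce]) auto
  then show False
    by (rule wall_strip.inconsistent)
qed

section \<open>Reflection of the interval\<close>

lemma reflect_Icc_0_1: "(\<lambda>y::real. 1 - y) ` {0..1} = {0..1}"
  by (auto simp: image_iff intro!: bexI[where x="1 - _"])

lemma reflect_UNIV: "range (\<lambda>y::real. 1 - y) = UNIV"
  by (auto simp: image_iff intro!: exI[where x="1 - _"])

lemma has_real_derivative_reflect:
  fixes f :: "real \<Rightarrow> real"
  assumes "(f has_real_derivative D) (at (1 - x) within (\<lambda>y. 1 - y) ` S)"
  shows "((\<lambda>y. f (1 - y)) has_real_derivative - D) (at x within S)"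
proof -
  have "((\<lambda>y. 1 - y) has_real_derivative - 1) (at x within S)"
    by (auto intro!: derivative_eq_intros)
  from DERIV_image_chain[where g="\<lambda>y. 1 - y", OF assms this]
  show ?thesis
    by (simp add: comp_def)
qed

lemma continuous_on_reflect_rectangle:
  fixes f :: "real \<Rightarrow> real \<Rightarrow> real"
  assumes "continuous_on ({0..1} \<times> {0..T}) (\<lambda>(x, t). f x t)"
  shows "continuous_on ({0..1} \<times> {0..T}) (\<lambda>(x, t). f (1 - x) t)"
proof -
  have "continuous_on ({0..1} \<times> {0..T}) ((\<lambda>(x, t). f x t) \<circ> (\<lambda>(x, t). (1 - x, t)))"
    by (rule continuous_on_compose[OF _ continuous_on_subset[OF assms]])
      (auto simp: case_prod_beta intro!: continuous_intros)
  then show ?thesis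
    by (simp add: comp_def case_prod_beta)
qed

lemma C21_with_reflect:
  assumes "C21_with T f fx fxx ft"
  shows "C21_with T (\<lambda>y t. k - f (1 - y) t) (\<lambda>y t. fx (1 - y) t) (\<lambda>y t. - fxx (1 - y) t)
    (\<lambda>y t. - ft (1 - y) t)"
  unfolding C21_with_def
proof (intro conjI ballI)
  have cont: "continuous_on ({0..1} \<times> {0..T}) (\<lambda>(x, t). f (1 - x) t)"
    "continuous_on ({0..1} \<times> {0..T}) (\<lambda>(x, t). fx (1 - x) t)"
    "continuous_on ({0..1} \<times> {0..T}) (\<lambda>(x, t). fxx (1 - x) t)"
    "continuous_on ({0..1} \<times> {0..T}) (\<lambda>(x, t). ft (1 - x) t)"
    using assms by (auto simp: C21_with_def intro: continuous_on_reflect_rectangle)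
  then show "continuous_on ({0..1} \<times> {0..T}) (\<lambda>(x, t). k - f (1 - x) t)"
    "continuous_on ({0..1} \<times> {0..T}) (\<lambda>(x, t). fx (1 - x) t)"
    "continuous_on ({0..1} \<times> {0..T}) (\<lambda>(x, t). - fxx (1 - x) t)"
    "continuous_on ({0..1} \<times> {0..T}) (\<lambda>(x, t). - ft (1 - x) t)"
    by (auto simp: case_prod_beta intro!: continuous_intros)
  fix x t :: real assume "x \<in> {0..1}" "t \<in> {0..T}"
  then have "1 - x \<in> {0..1}"
    by simp
  with assms \<open>t \<in> {0..T}\<close>
  have "((\<lambda>y. f y t) has_real_derivative fx (1 - x) t) (at (1 - x) within {0..1})"
    "((\<lambda>y. fx y t) has_real_derivative fxx (1 - x) t) (at (1 - x) within {0..1})"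
    and ft: "((\<lambda>s. f (1 - x) s) has_real_derivative ft (1 - x) t) (at t within {0..T})"
    unfolding C21_with_def by blast+
  then have "((\<lambda>y. f (1 - y) t) has_real_derivative - fx (1 - x) t) (at x within {0..1})"
    "((\<lambda>y. fx (1 - y) t) has_real_derivative - fxx (1 - x) t) (at x within {0..1})"
    using has_real_derivative_reflect[of _ _ x "{0..1}"] unfolding reflect_Icc_0_1 by blast+
  with ft show "((\<lambda>y. k - f (1 - y) t) has_real_derivative fx (1 - x) t) (at x within {0..1})"
    "((\<lambda>y. fx (1 - y) t) has_real_derivative - fxx (1 - x) t) (at x within {0..1})"
    "((\<lambda>s. k - f (1 - x) s) has_real_derivative - ft (1 - x) t) (at t within {0..T})"
    by (auto intro!: derivative_eq_intros)
qed

lemma is_solution_reflect: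
  assumes "is_solution \<nu> \<gamma> T \<rho> u0 v \<eta>"
  shows "is_solution \<nu> \<gamma> T (\<lambda>x. \<rho> (1 - x)) (\<lambda>x. - u0 (1 - x)) (\<lambda>x t. - v (1 - x) t)
    (\<lambda>x t. 1 - \<eta> (1 - x) t)"
proof -
  obtain vx vxx vt ex exx et where Cv: "C21_with T v vx vxx vt" and Ce: "C21_with T \<eta> ex exx et"
    and eqn: "\<forall>x\<in>{0<..<1}. \<forall>t\<in>{0<..T}. 0 < ex x t \<and>
      (\<exists>P Q. ((\<lambda>y. \<rho> y powr \<gamma> / ex y t powr \<gamma>) has_real_derivative P) (at x) \<and>
        ((\<lambda>y. vx y t / ex y t) has_real_derivative Q) (at x) \<and> \<rho> x * vt x t + P = \<nu> * Q) \<and>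
      et x t = v x t"
    and init: "\<forall>x\<in>{0<..<1}. v x 0 = u0 x \<and> \<eta> x 0 = x"
    and bc: "\<forall>t\<in>{0<..T}. v 0 t = 0 \<and> v 1 t = 0 \<and> vx 0 t = 0 \<and> vx 1 t = 0"
    using assms unfolding is_solution_def by blast
  have reflected_eqn: "0 < ex (1 - x) t \<and>
      (\<exists>P Q. ((\<lambda>y. \<rho> (1 - y) powr \<gamma> / ex (1 - y) t powr \<gamma>) has_real_derivative P) (at x) \<and>
        ((\<lambda>y. vx (1 - y) t / ex (1 - y) t) has_real_derivative Q) (at x) \<and>
        \<rho> (1 - x) * - vt (1 - x) t + P = \<nu> * Q) \<and>
      - et (1 - x) t = - v (1 - x) t"
    if x: "x \<in> {0<..<1}" and t: "t \<in> {0<..T}" for x t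
  proof -
    have x': "1 - x \<in> {0<..<1}"
      using x by simp
    obtain P Q where P: "((\<lambda>y. \<rho> y powr \<gamma> / ex y t powr \<gamma>) has_real_derivative P) (at (1 - x))"
      and Q: "((\<lambda>y. vx y t / ex y t) has_real_derivative Q) (at (1 - x))"
      and "\<rho> (1 - x) * vt (1 - x) t + P = \<nu> * Q"
      using eqn x' t by blast
    then have "\<rho> (1 - x) * - vt (1 - x) t + - P = \<nu> * - Q"
      by simp
    moreover have "((\<lambda>y. \<rho> (1 - y) powr \<gamma> / ex (1 - y) t powr \<gamma>) has_real_derivative - P) (at x)"
      "((\<lambda>y. vx (1 - y) t / ex (1 - y) t) has_real_derivative - Q) (at x)"
      using has_real_derivative_reflect[of _ _ x UNIV] P Q unfolding reflect_UNIV by auto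
    ultimately show ?thesis
      using eqn x' t by (intro conjI exI[of _ "- P"] exI[of _ "- Q"]) auto
  qed
  have "C21_with T (\<lambda>x t. - v (1 - x) t) (\<lambda>x t. vx (1 - x) t) (\<lambda>x t. - vxx (1 - x) t)
      (\<lambda>x t. - vt (1 - x) t)"
    using C21_with_reflect[OF Cv, of 0] by simp
  moreover have "\<forall>x\<in>{0<..<1}. - v (1 - x) 0 = - u0 (1 - x) \<and> 1 - \<eta> (1 - x) 0 = x"
    using init by auto
  moreover have "\<forall>t\<in>{0<..T}.
      - v (1 - 0) t = 0 \<and> - v (1 - 1) t = 0 \<and> vx (1 - 0) t = 0 \<and> vx (1 - 1) t = 0"
    using bc by auto
  ultimately show ?thesis
    unfolding is_solution_def using C21_with_reflect[OF Ce, of 1] reflected_eqn by blast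
qed

lemma no_solution_under_right_condition:
  assumes "0 < \<nu>" "0 < \<gamma>" "0 < T" "0 < lam" "0 < b" "b < 1"
    and \<rho>_cont: "continuous_on {0..1} \<rho>" and \<rho>_pos: "\<And>x. x \<in> {0<..<1} \<Longrightarrow> 0 < \<rho> x"
    and decay: "\<And>x. x \<in> {b<..<1} \<Longrightarrow> \<exists>D. (\<rho> has_real_derivative D) (at x) \<and> D \<le> - lam * \<rho> x"
    and "0 < u0 b" and u0_nonneg: "\<And>x. x \<in> {b<..<1} \<Longrightarrow> 0 \<le> u0 x"
  shows "\<not> is_solution \<nu> \<gamma> T \<rho> u0 v \<eta>"
proof
  assume "is_solution \<nu> \<gamma> T \<rho> u0 v \<eta>"
  moreover have "\<not> is_solution \<nu> \<gamma> T (\<lambda>x. \<rho> (1 - x)) (\<lambda>x. - u0 (1 - x)) (\<lambda>x t. - v (1 - x) t)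
      (\<lambda>x t. 1 - \<eta> (1 - x) t)"
  proof (rule no_solution_under_left_condition[where a="1 - b"])
    show "continuous_on {0..1} (\<lambda>x. \<rho> (1 - x))"
      by (rule continuous_on_compose2[OF \<rho>_cont]) (auto intro!: continuous_intros)
    show "\<exists>D. ((\<lambda>y. \<rho> (1 - y)) has_real_derivative D) (at x) \<and> lam * \<rho> (1 - x) \<le> D"
      if x: "x \<in> {0<..<1 - b}" for x
    proof -
      obtain D where "(\<rho> has_real_derivative D) (at (1 - x))" and "D \<le> - lam * \<rho> (1 - x)"
        using decay[of "1 - x"] x by auto
      then show ?thesis
        using has_real_derivative_reflect[of \<rho> D x UNIV] unfolding reflect_UNIV by auto
    qed
  qed (use assms in auto)
  ultimately show False
    using is_solution_reflect by blast
qed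

lemma derivative_ge_of_log_derivative_ge:
  fixes \<rho> :: "real \<Rightarrow> real"
  assumes "\<rho> differentiable (at x)" and "0 < \<rho> x" and "lam \<le> deriv \<rho> x / \<rho> x"
  shows "\<exists>D. (\<rho> has_real_derivative D) (at x) \<and> lam * \<rho> x \<le> D"
  using assms
  by (auto simp: DERIV_deriv_iff_real_differentiable pos_le_divide_eq intro!: exI[of _ "deriv \<rho> x"])

lemma derivative_le_of_log_derivative_le:
  fixes \<rho> :: "real \<Rightarrow> real"
  assumes "\<rho> differentiable (at x)" and "0 < \<rho> x" and "deriv \<rho> x / \<rho> x \<le> - lam"
  shows "\<exists>D. (\<rho> has_real_derivative D) (at x) \<and> D \<le> - lam * \<rho> x"
  using assms
  by (auto simp: DERIV_deriv_iff_real_differentiable pos_divide_le_eq intro!: exI[of _ "deriv \<rho> x"])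

theorem theorem2p2:
  fixes \<nu> \<gamma> :: real and \<rho>0 u0 v0 :: "real \<Rightarrow> real"
    and lam1 lam2 lam3 lam4 :: real
  assumes "\<nu> > 0" and "\<gamma> > 1"
    and "continuous_on {0..1} \<rho>0"
    and "\<forall>x\<in>{0<..<1}. \<rho>0 x > 0" and "\<rho>0 0 = 0" and "\<rho>0 1 = 0"
    and "v0 = u0" and "continuous_on {0..1} v0"
    and "lam1 > 0" and "lam2 > 0" and "0 < lam3" and "lam3 < 1" and "0 < lam4" and "lam4 < 1"
    and "((\<forall>x\<in>{0<..<lam3}. \<rho>0 differentiable (at x) \<and> deriv \<rho>0 x / \<rho>0 x \<ge> lam1)
           \<and> v0 lam3 < 0 \<and> (\<forall>x\<in>{0<..<lam3}. v0 x \<le> 0))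
       \<or> ((\<forall>x\<in>{lam4<..<1}. \<rho>0 differentiable (at x) \<and> deriv \<rho>0 x / \<rho>0 x \<le> - lam2)
           \<and> v0 lam4 > 0 \<and> (\<forall>x\<in>{lam4<..<1}. v0 x \<ge> 0))"
  shows "\<forall>T>0. \<not> (\<exists>v \<eta>. is_solution \<nu> \<gamma> T \<rho>0 u0 v \<eta>)"
proof (intro allI impI notI)
  fix T :: real
  assume "0 < T" and "\<exists>v \<eta>. is_solution \<nu> \<gamma> T \<rho>0 u0 v \<eta>"
  then obtain v \<eta> where sol: "is_solution \<nu> \<gamma> T \<rho>0 u0 v \<eta>"
    by blast
  from assms(15) show False
  proof (elim disjE conjE)
    assume "\<forall>x\<in>{0<..<lam3}. \<rho>0 differentiable (at x) \<and> deriv \<rho>0 x / \<rho>0 x \<ge> lam1"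
      and "v0 lam3 < 0" and "\<forall>x\<in>{0<..<lam3}. v0 x \<le> 0"
    then show False
      using no_solution_under_left_condition[of \<nu> \<gamma> T lam1 lam3 \<rho>0 u0 v \<eta>] sol \<open>0 < T\<close>
        assms(1-4,7,9,11,12) derivative_ge_of_log_derivative_ge by auto
  next
    assume "\<forall>x\<in>{lam4<..<1}. \<rho>0 differentiable (at x) \<and> deriv \<rho>0 x / \<rho>0 x \<le> - lam2"
      and "v0 lam4 > 0" and "\<forall>x\<in>{lam4<..<1}. v0 x \<ge> 0"
    then show False
      using no_solution_under_right_condition[of \<nu> \<gamma> T lam2 lam4 \<rho>0 u0 v \<eta>] sol \<open>0 < T\<close>
        assms(1-4,7,10,13,14) derivative_le_of_log_derivative_le by auto
  qed
qed

end
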